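(* Let $\mathbf{A}\in\mathbb{R}^{m\times n}$ with columns $\mathbf{a}_1,\dots,\mathbf{a}_n$, let $\mathbf{y}\in\mathbb{R}^m$, and let $f(\cdot\,;y):\mathbb{R}\to\mathbb{R}$ be, for each $y$, proper, lower semi-continuous, convex and differentiable with $(1/\alpha)$-Lipschitz derivative $f'$ for some $\alpha>0$. Set $F(\mathbf{z};\mathbf{y})=\sum_{i=1}^m f(z_i;y_i)$ for $\mathbf{z}\in\mathbb{R}^m$ and let $\nabla F(\mathbf{z};\mathbf{y})$ denote its gradient with respect to $\mathbf{z}$. Consider the non-negative linear regression problem $$\mathbf{x}^\star\in\arg\min_{\mathbf{x}\in\mathbb{R}^n,\ \mathbf{x}\ge 0}\ \sum_{i=1}^m f([\mathbf{A}\mathbf{x}]_i;y_i)$$ and its dual $$\boldsymbol{\theta}^\star=\arg\max_{\boldsymbol{\theta}\in\mathcal{F}_D}\ -\sum_{i=1}^m f^*(-\theta_i;y_i),\qquad \mathcal{F}_D=\{\boldsymbol{\theta}\in\mathbb{R}^m:\mathbf{A}^T\boldsymbol{\theta}\le 0\},$$ where $f^*(\cdot\,;y)$ is the Fenchel conjugate of $f(\cdot\,;y)$. Assume the interior $\mathrm{Int}(\mathcal{F}_D)$ is nonempty and fix $\mathbf{t}\in\mathrm{Int}(\mathcal{F}_D)$. Define $\Xi_{\mathbf{t}}:\mathbb{R}^m\to\mathbb{R}^m$ by $$\Xi_{\mathbf{t}}(\mathbf{z})=\mathbf{z}+\Big(\max_{j\in[n]}\frac{\max(0,\mathbf{a}_j^T\mathbf{z})}{|\mathbf{a}_j^T\mathbf{t}|}\Big)\mathbf{t},$$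 and $\Theta(\mathbf{x})=\Xi_{\mathbf{t}}(-\nabla F(\mathbf{A}\mathbf{x};\mathbf{y}))$. Then for any primal point $\mathbf{x}\in\mathbb{R}^n_{\ge 0}$ we have $\Theta(\mathbf{x})\in\mathcal{F}_D$. Moreover, $\Theta(\mathbf{x})\to\boldsymbol{\theta}^\star$ as $\mathbf{x}\to\mathbf{x}^\star$.
   Context: $[n]=\{1,\dots,n\}$; vector inequalities are coordinate-wise. $f^*(u;y)=\sup_{z\in\mathbb{R}} zu-f(z;y)$. The dual solution $\boldsymbol{\theta}^\star$ is unique; $\mathbf{x}^\star$ denotes a primal solution. $\mathrm{Int}(\mathcal{F}_D)$ is the topological interior of $\mathcal{F}_D$ in $\mathbb{R}^m$. *)

theory Defs
  imports "HOL-Analysis.Analysis"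
begin

definition fconj :: "(real \<Rightarrow> real \<Rightarrow> real) \<Rightarrow> real \<Rightarrow> real \<Rightarrow> ereal" where
  "fconj f u y = (SUP z. ereal (z * u - f z y))"

definition primal_obj :: "(real \<Rightarrow> real \<Rightarrow> real) \<Rightarrow> real^'n^'m \<Rightarrow> real^'m \<Rightarrow> real^'n \<Rightarrow> real" where
  "primal_obj f A y x = (\<Sum>i\<in>UNIV. f ((A *v x) $ i) (y $ i))"

definition dual_obj :: "(real \<Rightarrow> real \<Rightarrow> real) \<Rightarrow> real^'m \<Rightarrow> real^'m \<Rightarrow> ereal" where
  "dual_obj f y \<theta> = - (\<Sum>i\<in>UNIV. fconj f (- (\<theta> $ i)) (y $ i))"

definition dual_feas :: "real^'n^'m \<Rightarrow> (real^'m) set" where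
  "dual_feas A = {\<theta>. \<forall>j. (transpose A *v \<theta>) $ j \<le> 0}"

definition gradF :: "(real \<Rightarrow> real \<Rightarrow> real) \<Rightarrow> real^'m \<Rightarrow> real^'m \<Rightarrow> real^'m" where
  "gradF f' z y = (\<chi> i. f' (z $ i) (y $ i))"

definition Xi :: "real^'n^'m \<Rightarrow> real^'m \<Rightarrow> real^'m \<Rightarrow> real^'m" where
  "Xi A t z = z + (Max (range (\<lambda>j::'n. max 0 (column j A \<bullet> z) / \<bar>column j A \<bullet> t\<bar>))) *\<^sub>R t"

definition Theta :: "real^'n^'m \<Rightarrow> real^'m \<Rightarrow> (real \<Rightarrow> real \<Rightarrow> real) \<Rightarrow> real^'m \<Rightarrow> real^'n \<Rightarrow> real^'m" where
  "Theta A y f' t x = Xi A t (- gradF f' (A *v x) y)"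

end

theory Submission imports Defs begin

text \<open>
  Since \<open>t\<close> lies in the interior of the cone \<open>F_D\<close>, every nonzero column satisfies
  \<open>a_j\<^sup>T t < 0\<close>, so adding the multiple of \<open>t\<close> in \<open>\<Xi>\<^sub>t\<close> pushes any point into \<open>F_D\<close>;
  moreover \<open>\<Xi>\<^sub>t\<close> is continuous and is the identity on \<open>F_D\<close>.
  At a primal minimiser \<open>x\<^sup>\<star>\<close> the KKT conditions of the non-negativity constraints say that
  \<open>\<theta>\<^sub>0 = -\<nabla>F(A x\<^sup>\<star>)\<close> is dual feasible with \<open>\<theta>\<^sub>0\<^sup>T A x\<^sup>\<star> = 0\<close>; by the Fenchel--Young
  equality the dual value at \<open>\<theta>\<^sub>0\<close> equals the primal value at \<open>x\<^sup>\<star>\<close>, so weak duality makes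
  \<open>\<theta>\<^sub>0\<close> the dual optimum \<open>\<theta>\<^sup>\<star>\<close>. Hence \<open>\<Theta>(x) = \<Xi>\<^sub>t(-\<nabla>F(A x)) \<rightarrow> \<Xi>\<^sub>t(\<theta>\<^sub>0) = \<theta>\<^sup>\<star>\<close>.
\<close>

lemma transpose_mult_vec_nth: "(transpose A *v \<theta>) $ j = column j A \<bullet> \<theta>"
  for A :: "real^'n^'m"
  by (simp add: matrix_vector_mult_def transpose_def column_def inner_vec_def mult.commute)

lemma inner_matrix_vector_mult: "\<eta> \<bullet> (A *v x) = (transpose A *v \<eta>) \<bullet> x"
  for A :: "real^'n^'m"
  by (metis dot_lmul_matrix inner_commute vector_transpose_matrix)

lemma dual_feas_iff_columns: "\<theta> \<in> dual_feas A \<longleftrightarrow> (\<forall>j. column j A \<bullet> \<theta> \<le> 0)"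
  for A :: "real^'n^'m"
  unfolding dual_feas_def by (simp only: mem_Collect_eq transpose_mult_vec_nth)

lemma interior_dual_feas_column_inner_neg:
  fixes A :: "real^'n^'m"
  assumes "t \<in> interior (dual_feas A)" and "column j A \<noteq> 0"
  shows "column j A \<bullet> t < 0"
proof -
  define c where "c = column j A"
  obtain e where e: "e > 0" "ball t e \<subseteq> dual_feas A"
    using assms(1) by (meson mem_interior)
  have c_pos: "norm c > 0" using assms(2) c_def by simp
  define s where "s = e / 2 / norm c"
  have "dist t (t + s *\<^sub>R c) < e" using e c_pos by (simp add: s_def dist_norm)
  with e have "t + s *\<^sub>R c \<in> dual_feas A" by auto
  then have "c \<bullet> (t + s *\<^sub>R c) \<le> 0" using dual_feas_iff_columns c_def by blast
  moreover have "c \<bullet> (t + s *\<^sub>R c) = c \<bullet> t + s * (norm c)\<^sup>2"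
    by (simp add: inner_add_right power2_norm_eq_inner)
  moreover have "s * (norm c)\<^sup>2 > 0" using e c_pos by (simp add: s_def)
  ultimately show ?thesis unfolding c_def by linarith
qed

lemma Xi_in_dual_feas:
  fixes A :: "real^'n^'m"
  assumes t: "t \<in> interior (dual_feas A)"
  shows "Xi A t z \<in> dual_feas A"
  unfolding dual_feas_iff_columns
proof
  fix j
  define c where "c = column j A"
  define M where "M = Max (range (\<lambda>k. max 0 (column k A \<bullet> z) / \<bar>column k A \<bullet> t\<bar>))"
  have Xi_inner: "c \<bullet> Xi A t z = c \<bullet> z + M * (c \<bullet> t)"
    by (simp add: Xi_def M_def inner_add_right)
  show "column j A \<bullet> Xi A t z \<le> 0"
  proof (cases "c = 0")
    case True
    then show ?thesis using Xi_inner c_def by simp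
  next
    case False
    then have neg: "c \<bullet> t < 0"
      using interior_dual_feas_column_inner_neg[OF t] c_def by blast
    have "max 0 (c \<bullet> z) / \<bar>c \<bullet> t\<bar> \<le> M"
      unfolding M_def c_def by (simp add: Max_ge)
    moreover have "\<bar>c \<bullet> t\<bar> > 0" using neg by simp
    ultimately have "max 0 (c \<bullet> z) \<le> M * \<bar>c \<bullet> t\<bar>"
      by (simp add: pos_divide_le_eq)
    with neg have "c \<bullet> z + M * (c \<bullet> t) \<le> 0" by simp
    then show ?thesis using Xi_inner c_def by simp
  qed
qed

lemma Xi_eq_self_if_dual_feas:
  assumes "\<theta> \<in> dual_feas A"
  shows "Xi A t \<theta> = \<theta>"
proof -
  have "max 0 (column j A \<bullet> \<theta>) = 0" for j
    using assms by (simp add: dual_feas_iff_columns)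
  then show ?thesis by (simp add: Xi_def)
qed

lemma tendsto_Max_image:
  fixes f :: "'i \<Rightarrow> 'a \<Rightarrow> 'b::{linorder_topology}"
  assumes "finite I" "I \<noteq> {}" "\<And>i. i \<in> I \<Longrightarrow> ((\<lambda>x. f i x) \<longlongrightarrow> l i) F"
  shows "((\<lambda>x. Max ((\<lambda>i. f i x) ` I)) \<longlongrightarrow> Max (l ` I)) F"
  using assms
proof (induction I rule: finite_ne_induct)
  case (singleton i)
  then show ?case by simp
next
  case (insert i I)
  then have "((\<lambda>x. max (f i x) (Max ((\<lambda>i. f i x) ` I))) \<longlongrightarrow> max (l i) (Max (l ` I))) F"
    by (intro tendsto_max) auto
  with insert show ?case by simp
qed

lemma tendsto_Xi:
  fixes A :: "real^'n^'m"
  assumes "(g \<longlongrightarrow> z) F"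
  shows "((\<lambda>x. Xi A t (g x)) \<longlongrightarrow> Xi A t z) F"
proof -
  have "((\<lambda>x. max 0 (column j A \<bullet> g x) / \<bar>column j A \<bullet> t\<bar>)
      \<longlongrightarrow> max 0 (column j A \<bullet> z) / \<bar>column j A \<bullet> t\<bar>) F" for j
    \<comment> \<open>the denominator vanishes for zero columns, so \<open>tendsto_divide\<close> does not apply\<close>
    unfolding divide_inverse by (intro tendsto_mult_right tendsto_max tendsto_const tendsto_inner assms)
  then show ?thesis
    unfolding Xi_def by (intro tendsto_add tendsto_scaleR tendsto_Max_image assms tendsto_const) auto
qed

lemma tendsto_gradF:
  assumes "\<And>yy w. isCont (\<lambda>w. f' w yy) w" and "(g \<longlongrightarrow> z) F"
  shows "((\<lambda>x. gradF f' (g x) y) \<longlongrightarrow> gradF f' z y) F"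
  unfolding gradF_def
  by (intro tendsto_vec_lambda isCont_tendsto_compose[OF assms(1)] tendsto_vec_nth assms(2))

lemma fenchel_young_ineq: "ereal (c * u - f c yy) \<le> fconj f u yy"
  unfolding fconj_def by (rule SUP_upper) simp

lemma fconj_eq_at_derivative:
  assumes "convex_on UNIV (\<lambda>z. f z yy)" and "((\<lambda>w. f w yy) has_real_derivative d) (at c)"
  shows "fconj f d yy = ereal (c * d - f c yy)"
proof (rule antisym)
  have "f z yy - f c yy \<ge> d * (z - c)" for z
    using convex_on_imp_above_tangent[of UNIV "\<lambda>z. f z yy" c z d] assms by simp
  then show "fconj f d yy \<le> ereal (c * d - f c yy)"
    unfolding fconj_def by (intro SUP_least) (simp add: algebra_simps)
qed (rule fenchel_young_ineq)

lemma dual_obj_le_primal_obj: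
  fixes A :: "real^'n^'m"
  assumes "\<eta> \<in> dual_feas A" and "\<forall>j. x $ j \<ge> 0"
  shows "dual_obj f y \<eta> \<le> ereal (primal_obj f A y x)"
proof -
  define z where "z = A *v x"
  have "\<eta> \<bullet> z = (\<Sum>j\<in>UNIV. (transpose A *v \<eta>) $ j * x $ j)"
    by (simp only: z_def inner_matrix_vector_mult) (simp add: inner_vec_def del: vector_transpose_matrix)
  also have "\<dots> \<le> 0"
    using assms unfolding dual_feas_def by (intro sum_nonpos) (simp add: mult_nonpos_nonneg)
  finally have "\<eta> \<bullet> z \<le> 0" .
  have "ereal (- primal_obj f A y x) \<le> ereal (- (\<eta> \<bullet> z) - primal_obj f A y x)"
    using \<open>\<eta> \<bullet> z \<le> 0\<close> by simp
  also have "\<dots> = (\<Sum>i\<in>UNIV. ereal (z $ i * - (\<eta> $ i) - f (z $ i) (y $ i)))"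
    by (simp add: z_def primal_obj_def sum_ereal inner_vec_def sum_subtractf sum_negf mult.commute)
  also have "\<dots> \<le> (\<Sum>i\<in>UNIV. fconj f (- (\<eta> $ i)) (y $ i))"
    by (intro sum_mono fenchel_young_ineq)
  finally show ?thesis
    unfolding dual_obj_def by (simp add: ereal_uminus_le_reorder)
qed

lemma dual_obj_neg_gradF:
  assumes "\<And>yy. convex_on UNIV (\<lambda>z. f z yy)"
    and "\<And>yy z. ((\<lambda>w. f w yy) has_real_derivative f' z yy) (at z)"
  shows "dual_obj f y (- gradF f' z y) = ereal ((\<Sum>i\<in>UNIV. f (z $ i) (y $ i)) + (- gradF f' z y) \<bullet> z)"
proof -
  have "(\<Sum>i\<in>UNIV. fconj f (- (- gradF f' z y $ i)) (y $ i))
      = (\<Sum>i\<in>UNIV. ereal (z $ i * f' (z $ i) (y $ i) - f (z $ i) (y $ i)))"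
  proof (rule sum.cong)
    fix i
    show "fconj f (- (- gradF f' z y $ i)) (y $ i) = ereal (z $ i * f' (z $ i) (y $ i) - f (z $ i) (y $ i))"
      unfolding gradF_def minus_minus vec_lambda_beta by (rule fconj_eq_at_derivative[OF assms(1) assms(2)])
  qed simp
  then show ?thesis
    by (simp add: dual_obj_def sum_ereal inner_vec_def gradF_def sum_subtractf sum_negf mult.commute)
qed

lemma DERIV_nonneg_at_min_on_ray:
  fixes g :: "real \<Rightarrow> real"
  assumes deriv: "DERIV g c :> D" and min: "\<And>s. c \<le> s \<Longrightarrow> g c \<le> g s"
  shows "0 \<le> D"
proof (rule ccontr)
  assume "\<not> 0 \<le> D"
  then obtain d where "d > 0" "\<forall>h>0. h < d \<longrightarrow> g (c + h) < g c"
    using DERIV_neg_dec_right[OF deriv] by force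
  then have "g (c + d / 2) < g c" by simp
  with min[of "c + d / 2"] \<open>d > 0\<close> show False by simp
qed

lemma orthant_min_partial_deriv:
  fixes g :: "real^'n \<Rightarrow> real"
  assumes nonneg: "\<forall>i. x $ i \<ge> 0"
    and min: "\<And>x'. \<forall>i. x' $ i \<ge> 0 \<Longrightarrow> g x \<le> g x'"
    and deriv: "DERIV (\<lambda>s. g (x + s *\<^sub>R axis j 1)) 0 :> D"
  shows "0 \<le> D" and "x $ j * D = 0"
proof -
  have ray: "g x \<le> g (x + s *\<^sub>R axis j 1)" if "- x $ j \<le> s" for s
    using nonneg that by (intro min) (auto simp: axis_def)
  show "0 \<le> D"
  proof (rule DERIV_nonneg_at_min_on_ray[OF deriv])
    fix s :: real
    assume "0 \<le> s"
    moreover have "0 \<le> x $ j" using nonneg by simp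
    ultimately show "g (x + 0 *\<^sub>R axis j 1) \<le> g (x + s *\<^sub>R axis j 1)"
      using ray[of s] by simp
  qed
  show "x $ j * D = 0"
  proof (cases "x $ j = 0")
    case False
    with nonneg have "x $ j > 0" by (simp add: order_less_le)
    then have "D = 0"
      by (rule DERIV_local_min[OF deriv]) (auto intro!: ray simp: abs_less_iff)
    then show ?thesis by simp
  qed simp
qed

lemma primal_obj_axis_has_real_derivative:
  fixes A :: "real^'n^'m"
  assumes f_deriv: "\<And>yy z. ((\<lambda>w. f w yy) has_real_derivative f' z yy) (at z)"
  shows "DERIV (\<lambda>s. primal_obj f A y (x + s *\<^sub>R axis j 1)) 0
           :> (transpose A *v gradF f' (A *v x) y) $ j"
proof -
  have "primal_obj f A y (x + s *\<^sub>R axis j 1) = (\<Sum>i\<in>UNIV. f ((A *v x) $ i + s * A $ i $ j) (y $ i))"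
    for s
    by (simp add: primal_obj_def matrix_vector_right_distrib matrix_vector_mult_scaleR
        matrix_vector_mult_basis column_def)
  moreover have "DERIV (\<lambda>s. \<Sum>i\<in>UNIV. f ((A *v x) $ i + s * A $ i $ j) (y $ i)) 0
      :> (\<Sum>i\<in>UNIV. f' ((A *v x) $ i) (y $ i) * A $ i $ j)"
  proof (rule DERIV_sum)
    fix i
    have "DERIV (\<lambda>s. (A *v x) $ i + s * A $ i $ j) 0 :> A $ i $ j"
      by (auto intro!: derivative_eq_intros)
    from DERIV_chain2[OF f_deriv this]
    show "DERIV (\<lambda>s. f ((A *v x) $ i + s * A $ i $ j) (y $ i)) 0 :> f' ((A *v x) $ i) (y $ i) * A $ i $ j"
      by simp
  qed
  moreover have "(\<Sum>i\<in>UNIV. f' ((A *v x) $ i) (y $ i) * A $ i $ j) = (transpose A *v gradF f' (A *v x) y) $ j"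
    by (simp add: matrix_vector_mult_def transpose_def gradF_def mult.commute)
  ultimately show ?thesis by simp
qed

lemma primal_min_complementary_slackness:
  fixes A :: "real^'n^'m"
  assumes f_deriv: "\<And>yy z. ((\<lambda>w. f w yy) has_real_derivative f' z yy) (at z)"
    and nonneg: "\<forall>j. xstar $ j \<ge> 0"
    and min: "\<And>x. \<forall>j. x $ j \<ge> 0 \<Longrightarrow> primal_obj f A y xstar \<le> primal_obj f A y x"
  shows "- gradF f' (A *v xstar) y \<in> dual_feas A"
    and "(- gradF f' (A *v xstar) y) \<bullet> (A *v xstar) = 0"
proof -
  define D where "D = transpose A *v gradF f' (A *v xstar) y"
  have D: "0 \<le> D $ j" "xstar $ j * D $ j = 0" for j
    using orthant_min_partial_deriv[OF nonneg min primal_obj_axis_has_real_derivative[OF f_deriv]]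
    unfolding D_def by auto
  show "- gradF f' (A *v xstar) y \<in> dual_feas A"
    using D(1) unfolding D_def transpose_mult_vec_nth by (simp add: dual_feas_iff_columns)
  have "(- gradF f' (A *v xstar) y) \<bullet> (A *v xstar) = - (D \<bullet> xstar)"
    unfolding D_def by (subst inner_minus_left) (simp only: inner_matrix_vector_mult)
  also have "\<dots> = - (\<Sum>j\<in>UNIV. xstar $ j * D $ j)"
    by (simp add: inner_vec_def mult.commute)
  finally show "(- gradF f' (A *v xstar) y) \<bullet> (A *v xstar) = 0"
    using D(2) by simp
qed

lemma neg_gradF_at_primal_min_dual_optimal:
  fixes A :: "real^'n^'m"
  assumes f_convex: "\<And>yy. convex_on UNIV (\<lambda>z. f z yy)"
    and f_deriv: "\<And>yy z. ((\<lambda>w. f w yy) has_real_derivative f' z yy) (at z)"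
    and nonneg: "\<forall>j. xstar $ j \<ge> 0"
    and min: "\<And>x. \<forall>j. x $ j \<ge> 0 \<Longrightarrow> primal_obj f A y xstar \<le> primal_obj f A y x"
  shows "- gradF f' (A *v xstar) y
           \<in> {\<theta> \<in> dual_feas A. \<forall>\<eta>\<in>dual_feas A. dual_obj f y \<eta> \<le> dual_obj f y \<theta>}"
proof -
  note slackness = primal_min_complementary_slackness[OF f_deriv nonneg min]
  have "dual_obj f y (- gradF f' (A *v xstar) y) = ereal (primal_obj f A y xstar)"
    using slackness(2) by (simp add: dual_obj_neg_gradF[OF f_convex f_deriv] primal_obj_def)
  then show ?thesis
    using slackness(1) dual_obj_le_primal_obj[OF _ nonneg] by auto
qed

theorem proposition1:
  fixes A :: "real^'n^'m" and y :: "real^'m"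
    and f f' :: "real \<Rightarrow> real \<Rightarrow> real" and \<alpha> :: real
    and xstar :: "real^'n" and thetastar t :: "real^'m"
  assumes alpha_pos: "\<alpha> > 0"
    and f_convex: "\<And>yy. convex_on UNIV (\<lambda>z. f z yy)"
    and f_deriv: "\<And>yy z. ((\<lambda>w. f w yy) has_real_derivative f' z yy) (at z)"
    and f'_lip: "\<And>yy z w. \<bar>f' z yy - f' w yy\<bar> \<le> (1 / \<alpha>) * \<bar>z - w\<bar>"
    and xstar_nonneg: "\<forall>j. xstar $ j \<ge> 0"
    and xstar_min: "\<And>x. \<forall>j. x $ j \<ge> 0 \<Longrightarrow> primal_obj f A y xstar \<le> primal_obj f A y x"
    and thetastar_argmax: "{\<theta> \<in> dual_feas A. \<forall>\<eta>\<in>dual_feas A. dual_obj f y \<eta> \<le> dual_obj f y \<theta>} = {thetastar}"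
    and t_int: "t \<in> interior (dual_feas A)"
  shows "(\<forall>x::real^'n. (\<forall>j. x $ j \<ge> 0) \<longrightarrow> Theta A y f' t x \<in> dual_feas A)
       \<and> (Theta A y f' t \<longlongrightarrow> thetastar) (at xstar within {x. \<forall>j. x $ j \<ge> 0})"
proof
  show "\<forall>x::real^'n. (\<forall>j. x $ j \<ge> 0) \<longrightarrow> Theta A y f' t x \<in> dual_feas A"
    unfolding Theta_def using Xi_in_dual_feas[OF t_int] by blast
next
  define \<theta>0 where "\<theta>0 = - gradF f' (A *v xstar) y"
  have opt: "\<theta>0 \<in> {\<theta> \<in> dual_feas A. \<forall>\<eta>\<in>dual_feas A. dual_obj f y \<eta> \<le> dual_obj f y \<theta>}"
    unfolding \<theta>0_def
    by (rule neg_gradF_at_primal_min_dual_optimal[OF f_convex f_deriv xstar_nonneg xstar_min])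
  have f'_cont: "isCont (\<lambda>w. f' w yy) w" for yy w
  proof -
    have "(1 / \<alpha>)-lipschitz_on UNIV (\<lambda>w. f' w yy)"
      by (rule lipschitz_onI) (use f'_lip alpha_pos in \<open>auto simp: dist_real_def\<close>)
    then show ?thesis
      using lipschitz_on_continuous_on continuous_on_eq_continuous_at by blast
  qed
  have "((\<lambda>x. - gradF f' (A *v x) y) \<longlongrightarrow> \<theta>0) (at xstar within {x. \<forall>j. x $ j \<ge> 0})"
    unfolding \<theta>0_def
    by (intro tendsto_minus tendsto_gradF[OF f'_cont]
        isCont_tendsto_compose[OF matrix_vector_mult_linear_continuous_at] tendsto_ident_at)
  then have "(Theta A y f' t \<longlongrightarrow> Xi A t \<theta>0) (at xstar within {x. \<forall>j. x $ j \<ge> 0})"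
    unfolding Theta_def by (rule tendsto_Xi)
  moreover have "Xi A t \<theta>0 = \<theta>0" "\<theta>0 = thetastar"
    using opt Xi_eq_self_if_dual_feas thetastar_argmax by blast+
  ultimately show "(Theta A y f' t \<longlongrightarrow> thetastar) (at xstar within {x. \<forall>j. x $ j \<ge> 0})"
    by simp
qed

end
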